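(* (Descent lemma.) Suppose $\theta$ is $\varepsilon_0$-close to $\mathcal{S}$ in the $P$-norm. Let $\theta^{\star}$ denote the projection of $\theta$ onto $\mathcal{S}$ in the $P$-norm and $\Delta=\theta-\theta^{\star}$. Then $$Q(\theta) - Q^{\star} \le \frac{\sqrt{\beta}}{2}\|\Delta\|_P^2,$$ where $Q^{\star}$ is the minimum value of $Q$.
   Context: Covariates $x\sim\mathcal{N}(0,\Sigma)$ with $\Sigma$ full rank, responses $y=Mx+z$, $z\sim\mathcal{N}(0,\Omega)$; $p\ge d$, $M\Sigma^{1/2}$ full column rank. $\theta=(A,B)$, $A\in\mathbb{R}^{p\times d}$, $B\in\mathbb{R}^{d\times d}$. Population loss $L(\theta)=\frac12\mathrm{Tr}(\Omega)+\frac12\|A\Sigma B^{\top}\Sigma^{1/2}-M\Sigma^{1/2}\|_F^2$ (closed form of the population loss of softmax self-attention), $R(\theta)=\frac18\|\Sigma^{1/2}(A^{\top}A-B^{\top}\Sigma B)\Sigma^{1/2}\|_F^2$, $Q=L+R$. With $U\Gamma V^{\top}$ an SVD of $M\Sigma^{1/2}$, $\mathcal{S}=\{(U\Gamma^{1/2}J^{\top}\Sigma^{-1/2};\ \Sigma^{-1/2}V\Gamma^{1/2}J^{\top}\Sigma^{-1/2}):J\in\mathbb{O}_d\}$ (the set of global minimizers of $Q$). $P=\mathrm{diag}(I_p,\Sigma)$, $\langle\theta_1,\theta_2\rangle_P=\mathrm{Tr}(\theta_1^{\top}P\theta_2)$. $K_0=2\sigma_d(M\Sigma^{1/2})\sigma_d(\Sigma)$,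 $K_1=2\sigma_1(M\Sigma^{1/2})\sigma_1(\Sigma)$, $\varepsilon_0=\min\left(1,\frac{\sqrt{K_0}}{\sqrt{3K_1\|\Sigma\|_{\mathrm{op}}}},\frac{(K_0/2)^{1/4}}{\sqrt{\|\Sigma\|_{\mathrm{op}}}}\right)$, $\beta=(14+7\kappa^2(\Sigma))K_1^2+21\|\Sigma\|_{\mathrm{op}}^2K_1+7\|\Sigma\|_{\mathrm{op}}^4$. Within $P$-distance $\varepsilon_0$ of $\mathcal{S}$ the one-point smoothness bound $\|P^{-1}\nabla Q(\theta)\|_P^2\le\beta\|\theta-\theta^{\star}\|_P^2$ holds. *)

theory Defs
  imports "HOL-Analysis.Analysis"
begin

definition sym_mat :: "real^'n^'n \<Rightarrow> bool" where
  "sym_mat X \<longleftrightarrow> transpose X = X"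

definition psd_mat :: "real^'n^'n \<Rightarrow> bool" where
  "psd_mat X \<longleftrightarrow> sym_mat X \<and> (\<forall>x. 0 \<le> x \<bullet> (X *v x))"

definition pd_mat :: "real^'n^'n \<Rightarrow> bool" where
  "pd_mat X \<longleftrightarrow> sym_mat X \<and> (\<forall>x. x \<noteq> 0 \<longrightarrow> 0 < x \<bullet> (X *v x))"

definition mat_sqrt :: "real^'n^'n \<Rightarrow> real^'n^'n" where
  "mat_sqrt X = (THE R. psd_mat R \<and> R ** R = X)"

definition diag_mat :: "real^'n^'n \<Rightarrow> bool" where
  "diag_mat X \<longleftrightarrow> (\<forall>i j. i \<noteq> j \<longrightarrow> X $ i $ j = 0)"

definition frob :: "real^'n^'m \<Rightarrow> real" where
  "frob X = sqrt (\<Sum>i\<in>UNIV. \<Sum>j\<in>UNIV. (X $ i $ j)^2)"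

text \<open>Largest singular value (= operator norm) and smallest singular value sigma_n of a
matrix with n columns (variational characterisation; for a tall matrix with m >= n
this is the n-th singular value).\<close>
definition sigma_max :: "real^'n^'m \<Rightarrow> real" where
  "sigma_max X = onorm (\<lambda>x. X *v x)"

definition sigma_min :: "real^'n^'m \<Rightarrow> real" where
  "sigma_min X = Inf {norm (X *v x) | x. norm x = 1}"

definition op_norm :: "real^'n^'m \<Rightarrow> real" where
  "op_norm X = onorm (\<lambda>x. X *v x)"

definition cond_num :: "real^'n^'n \<Rightarrow> real" where
  "cond_num X = sigma_max X / sigma_min X"

definition Lloss :: "real^'d^'d \<Rightarrow> real^'d^'p \<Rightarrow> real^'p^'p
    \<Rightarrow> (real^'d^'p) \<times> (real^'d^'d) \<Rightarrow> real" where
  "Lloss \<Sigma> M \<Omega> \<theta> = (case \<theta> of (A, B) \<Rightarrow>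
     trace \<Omega> / 2 + (frob (A ** \<Sigma> ** transpose B ** mat_sqrt \<Sigma> - M ** mat_sqrt \<Sigma>))^2 / 2)"

definition Rreg :: "real^'d^'d \<Rightarrow> (real^'d^'p) \<times> (real^'d^'d) \<Rightarrow> real" where
  "Rreg \<Sigma> \<theta> = (case \<theta> of (A, B) \<Rightarrow>
     (frob (mat_sqrt \<Sigma> ** (transpose A ** A - transpose B ** \<Sigma> ** B) ** mat_sqrt \<Sigma>))^2 / 8)"

definition Qloss :: "real^'d^'d \<Rightarrow> real^'d^'p \<Rightarrow> real^'p^'p
    \<Rightarrow> (real^'d^'p) \<times> (real^'d^'d) \<Rightarrow> real" where
  "Qloss \<Sigma> M \<Omega> \<theta> = Lloss \<Sigma> M \<Omega> \<theta> + Rreg \<Sigma> \<theta>"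

text \<open>P-norm with P = diag(I_p, Sigma): ||theta||_P^2 = Tr(theta^T P theta)
  = Tr(A^T A) + Tr(B^T Sigma B), theta stacked as [A; B].\<close>
definition Pnorm :: "real^'d^'d \<Rightarrow> (real^'d^'p) \<times> (real^'d^'d) \<Rightarrow> real" where
  "Pnorm \<Sigma> \<theta> = (case \<theta> of (A, B) \<Rightarrow>
     sqrt (trace (transpose A ** A) + trace (transpose B ** \<Sigma> ** B)))"

text \<open>The set S built from a (thin) SVD U Gamma V^T of M Sigma^(1/2).\<close>
definition Sset :: "real^'d^'d \<Rightarrow> real^'d^'p \<Rightarrow> real^'d^'d \<Rightarrow> real^'d^'d
    \<Rightarrow> ((real^'d^'p) \<times> (real^'d^'d)) set" where
  "Sset \<Sigma> U \<Gamma> V = {(U ** mat_sqrt \<Gamma> ** transpose J ** matrix_inv (mat_sqrt \<Sigma>),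
        matrix_inv (mat_sqrt \<Sigma>) ** V ** mat_sqrt \<Gamma> ** transpose J ** matrix_inv (mat_sqrt \<Sigma>))
      | J. orthogonal_matrix J}"

definition K0 :: "real^'d^'d \<Rightarrow> real^'d^'p \<Rightarrow> real" where
  "K0 \<Sigma> M = 2 * sigma_min (M ** mat_sqrt \<Sigma>) * sigma_min \<Sigma>"

definition K1 :: "real^'d^'d \<Rightarrow> real^'d^'p \<Rightarrow> real" where
  "K1 \<Sigma> M = 2 * sigma_max (M ** mat_sqrt \<Sigma>) * sigma_max \<Sigma>"

definition eps0 :: "real^'d^'d \<Rightarrow> real^'d^'p \<Rightarrow> real" where
  "eps0 \<Sigma> M = min 1 (min (sqrt (K0 \<Sigma> M) / sqrt (3 * K1 \<Sigma> M * op_norm \<Sigma>))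
                           (root 4 (K0 \<Sigma> M / 2) / sqrt (op_norm \<Sigma>)))"

definition beta :: "real^'d^'d \<Rightarrow> real^'d^'p \<Rightarrow> real" where
  "beta \<Sigma> M = (14 + 7 * (cond_num \<Sigma>)^2) * (K1 \<Sigma> M)^2
      + 21 * (op_norm \<Sigma>)^2 * K1 \<Sigma> M + 7 * (op_norm \<Sigma>)^4"

end

theory Submission
  imports Defs
begin

text \<open>
  Whitening by S = \<Sigma>^(1/2) turns \<theta> = (A, B) into X = A S, Y = S B S, in which
  Q(\<theta>) = Tr \<Omega> / 2 + |X Y^T - M S|^2 / 2 + |X^T X - Y^T Y|^2 / 8 (Frobenius norms); in particular
  Q* >= Tr \<Omega> / 2. The projection \<theta>* becomes X0 = U \<Gamma>^(1/2) J^T, Y0 = V \<Gamma>^(1/2) J^T, a balanced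
  factorisation of M S: X0 Y0^T = M S and X0^T X0 = Y0^T Y0, with both factors of operator norm at
  most \<sigma>1(M S)^(1/2). So at X = X0 + a, Y = Y0 + b both residuals lose their constant term and are
  bounded by linear plus quadratic expressions in |a|, |b|, while |a|^2 + |b|^2 <= |\<Sigma>|op |\<Delta>|_P^2.
  Closeness to the minimiser set is only needed in the form |\<Delta>|_P <= eps0 <= 1, which absorbs the
  quartic terms into the quadratic ones.

  The square roots are the unique PSD ones; their existence is obtained without spectral theory
  from Visser's iteration.
\<close>

lemma matrix_add_rdistrib: "((A::'a::semiring_1^'n^'m) + B) ** C = A ** C + B ** C"
  by (vector matrix_matrix_mult_def sum.distrib[symmetric] algebra_simps)

lemma matrix_diff_ldistrib: "(C::'a::ring_1^'n^'m) ** (A - B) = C ** A - C ** B"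
  by (vector matrix_matrix_mult_def sum_subtractf[symmetric] algebra_simps)

lemma matrix_diff_rdistrib: "((A::'a::ring_1^'n^'m) - B) ** C = A ** C - B ** C"
  by (vector matrix_matrix_mult_def sum_subtractf[symmetric] algebra_simps)

lemma transpose_add: "transpose (A + B) = transpose A + transpose (B::'a::plus^'n^'m)"
  by (simp add: transpose_def vec_eq_iff)

lemma transpose_diff: "transpose (A - B) = transpose A - transpose (B::'a::minus^'n^'m)"
  by (simp add: transpose_def vec_eq_iff)

lemma inner_matrix_vector_transpose: "x \<bullet> ((A::real^'n^'m) *v y) = (transpose A *v x) \<bullet> y"
  by (metis dot_lmul_matrix transpose_matrix_vector)

lemma transpose_eq_imp_entry_sym: "transpose (X::'a^'n^'n) = X \<Longrightarrow> X $ j $ i = X $ i $ j"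
  by (metis transpose_def vec_lambda_beta)

lemma inner_axis_matrix_axis: "axis i 1 \<bullet> ((X::real^'n^'m) *v axis j 1) = X $ i $ j"
proof -
  have "(X *v axis j 1) $ i = X $ i $ j"
    by (simp add: matrix_vector_mult_def axis_def if_distrib if_distribR sum.delta' cong: if_cong)
  then show ?thesis by (simp add: cart_eq_inner_axis inner_commute)
qed

lemma matrix_inv_mult:
  assumes "invertible (A::'a::semiring_1^'n^'n)"
  shows "matrix_inv A ** A = mat 1" and "A ** matrix_inv A = mat 1"
proof -
  have "A ** matrix_inv A = mat 1 \<and> matrix_inv A ** A = mat 1"
    using assms unfolding invertible_def matrix_inv_def by (rule someI_ex)
  then show "matrix_inv A ** A = mat 1" "A ** matrix_inv A = mat 1" by simp_all
qed

section \<open>Positive semidefinite square roots\<close>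

lemma psd_matD:
  assumes "psd_mat X"
  shows "transpose X = X" and "0 \<le> x \<bullet> (X *v x)"
  using assms by (simp_all add: psd_mat_def sym_mat_def)

lemma psd_if_pd: "pd_mat X \<Longrightarrow> psd_mat X"
  unfolding pd_mat_def psd_mat_def by (metis inner_zero_left order.refl order_less_imp_le)

lemma psd_if_diag_nonneg:
  assumes "diag_mat X" and "\<forall>i. 0 \<le> X $ i $ i"
  shows "psd_mat X"
proof -
  have row: "(\<Sum>j\<in>UNIV. x $ j * X $ i $ j) = x $ i * X $ i $ i" for x i
  proof -
    have "(\<Sum>j\<in>UNIV. x $ j * X $ i $ j) = (\<Sum>j\<in>UNIV. if j = i then x $ i * X $ i $ i else 0)"
      by (rule sum.cong) (use assms(1) in \<open>auto simp: diag_mat_def\<close>)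
    then show ?thesis by simp
  qed
  have "x \<bullet> (X *v x) = (\<Sum>i\<in>UNIV. X $ i $ i * (x $ i)^2)" for x
    by (simp add: inner_vec_def matrix_vector_mult_def row power2_eq_square mult_ac)
  then have "0 \<le> x \<bullet> (X *v x)" for x
    using assms(2) by (simp add: sum_nonneg)
  moreover have "transpose X = X"
    using assms(1) unfolding diag_mat_def transpose_def vec_eq_iff by (metis vec_lambda_beta)
  ultimately show ?thesis by (simp add: psd_mat_def sym_mat_def)
qed

lemma discriminant_le_if_nonneg:
  fixes a b c :: real
  assumes "\<forall>t. 0 \<le> a + 2 * t * b + t^2 * c" and "0 \<le> c"
  shows "b^2 \<le> a * c"
proof (cases "c = 0")
  case True
  have "b = 0"
  proof (rule ccontr)
    assume "b \<noteq> 0"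
    then have "a + 2 * (- (a + 1) / (2 * b)) * b = -1" by (simp add: field_simps)
    then show False using assms(1)[rule_format, of "- (a + 1) / (2 * b)"] True by simp
  qed
  then show ?thesis using True by simp
next
  case False
  then have "0 < c" using assms(2) by simp
  have "0 \<le> a + 2 * (- b / c) * b + (- b / c)^2 * c" using assms(1) by blast
  also have "\<dots> = a - b^2 / c" using \<open>0 < c\<close> by (simp add: field_simps power2_eq_square)
  finally show ?thesis using \<open>0 < c\<close> by (simp add: field_simps)
qed

lemma psd_inner_square_le:
  assumes "psd_mat X"
  shows "(y \<bullet> (X *v x))^2 \<le> (y \<bullet> (X *v y)) * (x \<bullet> (X *v x))"
proof (rule discriminant_le_if_nonneg)
  have yx: "x \<bullet> (X *v y) = y \<bullet> (X *v x)"
    by (metis inner_matrix_vector_transpose psd_matD(1)[OF assms] inner_commute)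
  show "\<forall>t. 0 \<le> y \<bullet> (X *v y) + 2 * t * (y \<bullet> (X *v x)) + t^2 * (x \<bullet> (X *v x))"
  proof
    fix t :: real
    have "0 \<le> (y + t *\<^sub>R x) \<bullet> (X *v (y + t *\<^sub>R x))" by (rule psd_matD(2)[OF assms])
    also have "\<dots> = y \<bullet> (X *v y) + t * (x \<bullet> (X *v y)) + t * (y \<bullet> (X *v x)) + t^2 * (x \<bullet> (X *v x))"
      by (simp add: algebra_simps inner_add_left inner_add_right power2_eq_square)
    finally show "0 \<le> y \<bullet> (X *v y) + 2 * t * (y \<bullet> (X *v x)) + t^2 * (x \<bullet> (X *v x))"
      using yx by simp
  qed
qed (rule psd_matD(2)[OF assms])

lemma psd_mult_eq_0_if_quadratic_eq_0:
  assumes "psd_mat X" and "x \<bullet> (X *v x) = 0"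
  shows "X *v x = 0"
  using psd_inner_square_le[OF assms(1), of "X *v x" x] assms(2) by simp

lemma psd_norm_mult_square_le:
  assumes "psd_mat X" and "\<And>z. z \<bullet> (X *v z) \<le> c * (norm z)^2"
  shows "(norm (X *v x))^2 \<le> c * (x \<bullet> (X *v x))"
proof (cases "X *v x = 0")
  case False
  have "((norm (X *v x))^2)^2 = ((X *v x) \<bullet> (X *v x))^2" by (simp add: power2_norm_eq_inner)
  also have "\<dots> \<le> ((X *v x) \<bullet> (X *v (X *v x))) * (x \<bullet> (X *v x))" by (rule psd_inner_square_le[OF assms(1)])
  also have "\<dots> \<le> c * (norm (X *v x))^2 * (x \<bullet> (X *v x))"
    using assms psd_matD(2)[OF assms(1)] by (simp add: mult_right_mono)
  finally have "(norm (X *v x))^2 * (norm (X *v x))^2 \<le> (norm (X *v x))^2 * (c * (x \<bullet> (X *v x)))"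
    by (simp only: power2_eq_square mult_ac)
  moreover have "0 < (norm (X *v x))^2" using False by simp
  ultimately show ?thesis by (rule mult_left_le_imp_le)
qed (simp add: assms(1) psd_matD(2))

fun matrix_pow :: "'a::semiring_1^'n^'n \<Rightarrow> nat \<Rightarrow> 'a^'n^'n" where
  "matrix_pow B 0 = mat 1"
| "matrix_pow B (Suc k) = B ** matrix_pow B k"

lemma matrix_pow_add: "matrix_pow B i ** matrix_pow B j = matrix_pow B (i + j)"
  by (induction i) (simp_all add: matrix_mul_assoc[symmetric])

lemma matrix_pow_commute: "matrix_pow B i ** matrix_pow B j = matrix_pow B j ** matrix_pow B i"
  by (simp add: matrix_pow_add add.commute)

inductive pow_comb :: "real^'n^'n \<Rightarrow> real^'n^'n \<Rightarrow> real \<Rightarrow> bool" for B where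
  pow_comb_pow: "pow_comb B (matrix_pow B k) 1"
| pow_comb_add: "pow_comb B X a \<Longrightarrow> pow_comb B Y b \<Longrightarrow> pow_comb B (X + Y) (a + b)"
| pow_comb_scale: "0 \<le> c \<Longrightarrow> pow_comb B X a \<Longrightarrow> pow_comb B (c *\<^sub>R X) (c * a)"

lemma pow_comb_mult_pow: "pow_comb B Y b \<Longrightarrow> pow_comb B (matrix_pow B k ** Y) b"
proof (induction rule: pow_comb.induct)
  case (pow_comb_pow j)
  then show ?case using pow_comb.pow_comb_pow[of B "k + j"] by (simp add: matrix_pow_add)
next
  case (pow_comb_add X a Y b)
  then show ?case using pow_comb.pow_comb_add by (simp add: matrix_add_ldistrib)
next
  case (pow_comb_scale c X a)
  then show ?case using pow_comb.pow_comb_scale by (simp add: matrix_scalar_ac scalar_matrix_assoc[symmetric])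
qed

lemma pow_comb_mult: "pow_comb B X a \<Longrightarrow> pow_comb B Y b \<Longrightarrow> pow_comb B (X ** Y) (a * b)"
proof (induction rule: pow_comb.induct)
  case (pow_comb_pow k)
  then show ?case using pow_comb_mult_pow by simp
next
  case (pow_comb_add X a Y' b')
  then show ?case using pow_comb.pow_comb_add[of B "X ** Y" "a * b" "Y' ** Y" "b' * b"]
    by (simp add: matrix_add_rdistrib distrib_right)
next
  case (pow_comb_scale c X a)
  then show ?case using pow_comb.pow_comb_scale[of c B "X ** Y" "a * b"]
    by (simp add: scalar_matrix_assoc[symmetric] mult.assoc)
qed

lemma pow_comb_commute_pow: "pow_comb B Y b \<Longrightarrow> matrix_pow B k ** Y = Y ** matrix_pow B k"
  by (induction rule: pow_comb.induct)
    (simp_all add: matrix_pow_commute matrix_add_ldistrib matrix_add_rdistrib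
      matrix_scalar_ac scalar_matrix_assoc[symmetric])

lemma pow_comb_commute: "pow_comb B X a \<Longrightarrow> pow_comb B Y b \<Longrightarrow> X ** Y = Y ** X"
  by (induction rule: pow_comb.induct)
    (simp_all add: pow_comb_commute_pow matrix_add_ldistrib matrix_add_rdistrib
      matrix_scalar_ac scalar_matrix_assoc[symmetric])

text \<open>Visser's iteration: for \<open>0 \<le> B \<le> I\<close> it increases to \<open>I - (I - B)\<^sup>1\<^sup>/\<^sup>2\<close>.\<close>

fun sqrt_iter :: "real^'n^'n \<Rightarrow> nat \<Rightarrow> real^'n^'n" where
  "sqrt_iter B 0 = 0"
| "sqrt_iter B (Suc n) = (1/2) *\<^sub>R (B + sqrt_iter B n ** sqrt_iter B n)"

locale psd_contraction =
  fixes B :: "real^'n^'n"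
  assumes sym: "transpose B = B"
    and psd: "\<And>x. 0 \<le> x \<bullet> (B *v x)"
    and contraction: "\<And>x. norm (B *v x) \<le> norm x"
begin

lemma matrix_pow_sym: "transpose (matrix_pow B k) = matrix_pow B k"
proof (induction k)
  case (Suc k)
  then have "transpose (matrix_pow B (Suc k)) = matrix_pow B k ** B"
    by (simp add: matrix_transpose_mul sym)
  also have "\<dots> = B ** matrix_pow B k"
    using matrix_pow_commute[of B k 1] by simp
  finally show ?case by simp
qed simp

lemma norm_matrix_pow_le: "norm (matrix_pow B k *v x) \<le> norm x"
  by (induction k) (auto simp: matrix_vector_mul_assoc[symmetric] intro: order_trans[OF contraction])

lemma matrix_pow_psd: "0 \<le> x \<bullet> (matrix_pow B k *v x)"
proof (induction k arbitrary: x rule: less_induct)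
  case (less k)
  consider "k = 0" | "k = 1" | l where "k = Suc (Suc l)"
    by (metis One_nat_def not0_implies_Suc)
  then show ?case
  proof cases
    case 3
    have "matrix_pow B k = B ** (matrix_pow B l ** B)"
      using matrix_pow_commute[of B l 1] by (simp add: 3)
    then have "x \<bullet> (matrix_pow B k *v x) = (B *v x) \<bullet> (matrix_pow B l *v (B *v x))"
      by (simp add: matrix_vector_mul_assoc[symmetric] inner_matrix_vector_transpose sym)
    then show ?thesis using less 3 by simp
  qed (simp_all add: psd)
qed

lemma matrix_pow_quadratic_le: "x \<bullet> (matrix_pow B k *v x) \<le> (norm x)^2"
proof -
  have "x \<bullet> (matrix_pow B k *v x) \<le> norm x * norm (matrix_pow B k *v x)" by (rule norm_cauchy_schwarz)
  also have "\<dots> \<le> norm x * norm x" using norm_matrix_pow_le by (simp add: mult_left_mono)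
  finally show ?thesis by (simp add: power2_eq_square)
qed

lemma pow_comb_bounds:
  "pow_comb B X a \<Longrightarrow> transpose X = X \<and> 0 \<le> a \<and>
     (\<forall>x. 0 \<le> x \<bullet> (X *v x) \<and> x \<bullet> (X *v x) \<le> a * (norm x)^2)"
proof (induction rule: pow_comb.induct)
  case (pow_comb_pow k)
  then show ?case using matrix_pow_sym matrix_pow_psd matrix_pow_quadratic_le by simp
next
  case (pow_comb_add X a Y b)
  then show ?case
    by (auto simp: transpose_add matrix_vector_mult_add_rdistrib inner_add_right distrib_right
        intro: add_mono)
next
  case (pow_comb_scale c X a)
  then show ?case
    by (auto simp: transpose_scalar scaleR_matrix_vector_assoc[symmetric] mult.assoc intro: mult_left_mono)
qed

lemma sqrt_iter_pow_comb: "\<exists>a. pow_comb B (sqrt_iter B n) a \<and> a \<le> 1"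
proof (induction n)
  case 0
  have "pow_comb B (0 *\<^sub>R matrix_pow B 0) (0 * 1)" by (rule pow_comb_scale[OF _ pow_comb_pow]) simp
  then show ?case by auto
next
  case (Suc n)
  then obtain a where a: "pow_comb B (sqrt_iter B n) a" "a \<le> 1" by blast
  have "0 \<le> a" using pow_comb_bounds[OF a(1)] by simp
  have "pow_comb B (matrix_pow B 1) 1" by (rule pow_comb_pow)
  then have "pow_comb B ((1/2) *\<^sub>R (B + sqrt_iter B n ** sqrt_iter B n)) ((1/2) * (1 + a * a))"
    by (intro pow_comb_scale pow_comb_add pow_comb_mult a(1)) simp_all
  moreover have "(1/2) * (1 + a * a) \<le> 1" using a \<open>0 \<le> a\<close> by (simp add: mult_le_one)
  ultimately show ?case by auto
qed

lemma sqrt_iter_step_pow_comb: "\<exists>d. pow_comb B (sqrt_iter B (Suc n) - sqrt_iter B n) d"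
proof (induction n)
  case 0
  have "pow_comb B ((1/2) *\<^sub>R matrix_pow B 1) ((1/2) * 1)" by (intro pow_comb_scale pow_comb_pow) simp
  then show ?case by auto
next
  case (Suc n)
  let ?Y = "sqrt_iter B (Suc n)" and ?Z = "sqrt_iter B n"
  obtain d where d: "pow_comb B (?Y - ?Z) d" using Suc by blast
  obtain a where a: "pow_comb B ?Y a" using sqrt_iter_pow_comb by blast
  obtain b where b: "pow_comb B ?Z b" using sqrt_iter_pow_comb by blast
  have "sqrt_iter B (Suc (Suc n)) - ?Y = (1/2) *\<^sub>R (?Y ** ?Y - ?Z ** ?Z)"
    by (simp only: sqrt_iter.simps(2)[of B "Suc n"] sqrt_iter.simps(2)[of B n]
        scaleR_right_diff_distrib[symmetric]) simp
  also have "?Y ** ?Y - ?Z ** ?Z = (?Y - ?Z) ** (?Y + ?Z)"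
    using pow_comb_commute[OF a b] by (simp add: matrix_diff_rdistrib matrix_add_ldistrib)
  finally have "sqrt_iter B (Suc (Suc n)) - ?Y = (1/2) *\<^sub>R ((?Y - ?Z) ** (?Y + ?Z))" .
  moreover have "pow_comb B ((1/2) *\<^sub>R ((?Y - ?Z) ** (?Y + ?Z))) ((1/2) * (d * (a + b)))"
    by (intro pow_comb_scale pow_comb_mult pow_comb_add d a b) simp
  ultimately show ?case by metis
qed

lemma sqrt_iter_sym: "transpose (sqrt_iter B n) = sqrt_iter B n"
  using sqrt_iter_pow_comb pow_comb_bounds by blast

lemma sqrt_iter_quadratic_mono: "incseq (\<lambda>n. x \<bullet> (sqrt_iter B n *v x))"
proof (rule incseq_SucI)
  fix n
  obtain d where "pow_comb B (sqrt_iter B (Suc n) - sqrt_iter B n) d" using sqrt_iter_step_pow_comb by blast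
  then have "0 \<le> x \<bullet> ((sqrt_iter B (Suc n) - sqrt_iter B n) *v x)" using pow_comb_bounds by blast
  then show "x \<bullet> (sqrt_iter B n *v x) \<le> x \<bullet> (sqrt_iter B (Suc n) *v x)"
    by (simp add: matrix_vector_mult_diff_rdistrib inner_diff_right)
qed

lemma sqrt_iter_quadratic_le: "x \<bullet> (sqrt_iter B n *v x) \<le> (norm x)^2"
proof -
  obtain a where a: "pow_comb B (sqrt_iter B n) a" "a \<le> 1" using sqrt_iter_pow_comb by blast
  then have "x \<bullet> (sqrt_iter B n *v x) \<le> a * (norm x)^2" using pow_comb_bounds by blast
  also have "\<dots> \<le> (norm x)^2" using mult_right_mono[OF a(2), of "(norm x)^2"] by simp
  finally show ?thesis .
qed

lemma sqrt_iter_quadratic_convergent: "convergent (\<lambda>n. x \<bullet> (sqrt_iter B n *v x))"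
proof -
  obtain L where "(\<lambda>n. x \<bullet> (sqrt_iter B n *v x)) \<longlonglongrightarrow> L"
    using incseq_convergent[OF sqrt_iter_quadratic_mono] sqrt_iter_quadratic_le by blast
  then show ?thesis by (auto simp: convergent_def)
qed

lemma sym_entry_polarization:
  assumes "transpose (Z::real^'n^'n) = Z"
  shows "Z $ i $ j = (1/2) * ((axis i 1 + axis j 1) \<bullet> (Z *v (axis i 1 + axis j 1))
            - axis i 1 \<bullet> (Z *v axis i 1) - axis j 1 \<bullet> (Z *v axis j 1))"
  using transpose_eq_imp_entry_sym[OF assms, of i j]
  by (simp add: matrix_vector_right_distrib inner_add_left inner_add_right inner_axis_matrix_axis)

lemma sqrt_iter_entry_convergent: "convergent (\<lambda>n. sqrt_iter B n $ i $ j)"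
  unfolding sym_entry_polarization[OF sqrt_iter_sym]
  by (intro convergent_mult convergent_diff convergent_const sqrt_iter_quadratic_convergent)

definition sqrt_iter_lim :: "real^'n^'n" where
  "sqrt_iter_lim = (\<chi> i j. lim (\<lambda>n. sqrt_iter B n $ i $ j))"

lemma sqrt_iter_entry_tendsto: "(\<lambda>n. sqrt_iter B n $ i $ j) \<longlonglongrightarrow> sqrt_iter_lim $ i $ j"
  using sqrt_iter_entry_convergent[of i j] by (simp add: sqrt_iter_lim_def convergent_LIMSEQ_iff)

lemma sqrt_iter_lim_fixpoint: "sqrt_iter_lim = (1/2) *\<^sub>R (B + sqrt_iter_lim ** sqrt_iter_lim)"
proof -
  let ?Y = sqrt_iter_lim
  have "?Y $ i $ j = (1/2) * (B $ i $ j + (\<Sum>k\<in>UNIV. ?Y $ i $ k * ?Y $ k $ j))" for i j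
  proof (rule LIMSEQ_unique)
    have "sqrt_iter B (Suc n) $ i $ j
        = (1/2) * (B $ i $ j + (\<Sum>k\<in>UNIV. sqrt_iter B n $ i $ k * sqrt_iter B n $ k $ j))" for n
      by (simp add: matrix_matrix_mult_def)
    then show "(\<lambda>n. sqrt_iter B (Suc n) $ i $ j) \<longlonglongrightarrow> (1/2) * (B $ i $ j + (\<Sum>k\<in>UNIV. ?Y $ i $ k * ?Y $ k $ j))"
      by (simp only:) (intro tendsto_intros sqrt_iter_entry_tendsto)
    show "(\<lambda>n. sqrt_iter B (Suc n) $ i $ j) \<longlonglongrightarrow> ?Y $ i $ j"
      using sqrt_iter_entry_tendsto LIMSEQ_Suc by blast
  qed
  then show ?thesis by (simp add: vec_eq_iff matrix_matrix_mult_def)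
qed

lemma sqrt_iter_lim_sym: "transpose sqrt_iter_lim = sqrt_iter_lim"
proof -
  have "sqrt_iter_lim $ j $ i = sqrt_iter_lim $ i $ j" for i j
    using sqrt_iter_entry_tendsto[of j i] sqrt_iter_entry_tendsto[of i j]
    by (simp add: transpose_eq_imp_entry_sym[OF sqrt_iter_sym] LIMSEQ_unique)
  then show ?thesis by (simp add: transpose_def vec_eq_iff)
qed

lemma sqrt_iter_lim_quadratic_le: "x \<bullet> (sqrt_iter_lim *v x) \<le> (norm x)^2"
proof (rule LIMSEQ_le_const2)
  show "(\<lambda>n. x \<bullet> (sqrt_iter B n *v x)) \<longlonglongrightarrow> x \<bullet> (sqrt_iter_lim *v x)"
    unfolding inner_vec_def matrix_vector_mult_def
    by (simp only: vec_lambda_beta) (intro tendsto_intros sqrt_iter_entry_tendsto)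
qed (use sqrt_iter_quadratic_le in blast)

lemma psd_sqrt_one_minus_exists: "\<exists>R. psd_mat R \<and> R ** R = mat 1 - B"
proof (intro exI conjI)
  let ?Y = sqrt_iter_lim
  have "2 *\<^sub>R ?Y = B + ?Y ** ?Y"
    using arg_cong[OF sqrt_iter_lim_fixpoint, of "scaleR 2"] by simp
  then show "(mat 1 - ?Y) ** (mat 1 - ?Y) = mat 1 - B"
    by (simp add: matrix_diff_ldistrib matrix_diff_rdistrib scaleR_2 algebra_simps)
  show "psd_mat (mat 1 - ?Y)"
    using sqrt_iter_lim_sym sqrt_iter_lim_quadratic_le
    by (simp add: psd_mat_def sym_mat_def transpose_diff matrix_vector_mult_diff_rdistrib
        inner_diff_right power2_norm_eq_inner)
qed

end

lemma norm_diff_scaleR_square: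
  "(norm (x - k *\<^sub>R v))^2 = (norm x)^2 - 2 * k * (x \<bullet> v) + k^2 * (norm (v::'a::real_inner))^2"
proof -
  have "(norm (x - k *\<^sub>R v))^2 = x \<bullet> x - k * (x \<bullet> v) - k * (v \<bullet> x) + k * k * (v \<bullet> v)"
    by (simp add: power2_norm_eq_inner inner_diff_left inner_diff_right algebra_simps)
  then show ?thesis by (simp add: inner_commute[of v x] power2_eq_square flip: power2_norm_eq_inner)
qed

text \<open>Scaling \<open>X\<close> into \<open>0 \<le> X/c \<le> I\<close> makes \<open>B = I - X/c\<close> a PSD contraction, and
  \<open>X = c (I - B)\<close> has the square root \<open>c\<^sup>1\<^sup>/\<^sup>2 (I - B)\<^sup>1\<^sup>/\<^sup>2\<close>.\<close>

lemma psd_sqrt_exists: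
  fixes X :: "real^'n^'n"
  assumes X: "psd_mat X"
  shows "\<exists>R. psd_mat R \<and> R ** R = X"
proof -
  define c where "c = 1 + onorm ((*v) X)"
  have "0 < c" by (simp add: c_def onorm_pos_le add_pos_nonneg)
  have quad_le: "z \<bullet> (X *v z) \<le> c * (norm z)^2" for z
  proof -
    have "z \<bullet> (X *v z) \<le> norm z * (onorm ((*v) X) * norm z)"
      by (rule order_trans[OF norm_cauchy_schwarz mult_left_mono[OF onorm]]) simp_all
    also have "\<dots> \<le> norm z * (c * norm z)"
      by (intro mult_left_mono) (simp_all add: c_def distrib_right)
    finally show ?thesis by (simp add: power2_eq_square mult_ac)
  qed
  define B where "B = mat 1 - (1/c) *\<^sub>R X"
  have Bv: "B *v x = x - (1/c) *\<^sub>R (X *v x)" for x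
    by (simp add: B_def matrix_vector_mult_diff_rdistrib scaleR_matrix_vector_assoc)
  have "psd_contraction B"
  proof
    show "transpose B = B" by (simp add: B_def transpose_diff transpose_scalar psd_matD(1)[OF X])
  next
    fix x
    have "(1/c) * (x \<bullet> (X *v x)) \<le> (norm x)^2"
      using mult_left_mono[OF quad_le[of x], of "1/c"] \<open>0 < c\<close> by simp
    then show "0 \<le> x \<bullet> (B *v x)"
      by (simp add: Bv inner_diff_right power2_norm_eq_inner)
  next
    fix x
    have "(norm (B *v x))^2 = (norm x)^2 - 2 * (1/c) * (x \<bullet> (X *v x)) + (1/c)^2 * (norm (X *v x))^2"
      unfolding Bv by (rule norm_diff_scaleR_square)
    also have "\<dots> \<le> (norm x)^2 - 2 * (1/c) * (x \<bullet> (X *v x)) + (1/c)^2 * (c * (x \<bullet> (X *v x)))"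
      using psd_norm_mult_square_le[OF X quad_le] by (intro add_left_mono mult_left_mono) simp_all
    also have "\<dots> = (norm x)^2 - (1/c) * (x \<bullet> (X *v x))"
      using \<open>0 < c\<close> by (simp add: power2_eq_square field_simps)
    also have "\<dots> \<le> (norm x)^2" using psd_matD(2)[OF X, of x] \<open>0 < c\<close> by simp
    finally show "norm (B *v x) \<le> norm x" by (rule power2_le_imp_le) simp
  qed
  then obtain R where R: "psd_mat R" "R ** R = mat 1 - B"
    using psd_contraction.psd_sqrt_one_minus_exists by blast
  show ?thesis
  proof (intro exI conjI)
    have "(sqrt c *\<^sub>R R) ** (sqrt c *\<^sub>R R) = (sqrt c * sqrt c) *\<^sub>R (R ** R)"
      by (simp add: matrix_scalar_ac scalar_matrix_assoc[symmetric])
    then show "(sqrt c *\<^sub>R R) ** (sqrt c *\<^sub>R R) = X"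
      using \<open>0 < c\<close> R(2) by (simp add: B_def)
    show "psd_mat (sqrt c *\<^sub>R R)"
      using R(1) \<open>0 < c\<close>
      by (simp add: psd_mat_def sym_mat_def transpose_scalar scaleR_matrix_vector_assoc[symmetric])
  qed
qed

lemma trace_congruence_eq_sum_columns:
  fixes P :: "real^'k^'n" and R :: "real^'n^'n"
  shows "trace (transpose P ** R ** P) = (\<Sum>j\<in>UNIV. column j P \<bullet> (R *v column j P))"
proof -
  have swap: "(\<Sum>k\<in>UNIV. \<Sum>n\<in>UNIV. P$k$i * (P$n$i * R$n$k)) = (\<Sum>k\<in>UNIV. \<Sum>n\<in>UNIV. P$k$i * (P$n$i * R$k$n))" for i
    by (subst sum.swap) (simp add: mult_ac)
  show ?thesis
    by (simp add: trace_def matrix_matrix_mult_def transpose_def column_def matrix_vector_mult_def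
        inner_vec_def sum_distrib_left sum_distrib_right mult_ac swap)
qed

lemma psd_trace_congruence_nonneg: "psd_mat R \<Longrightarrow> 0 \<le> trace (transpose T ** R ** T)"
  unfolding trace_congruence_eq_sum_columns by (simp add: psd_matD(2) sum_nonneg)

lemma psd_mult_eq_0_if_trace_congruence_eq_0:
  fixes R :: "real^'n^'n" and T :: "real^'k^'n"
  assumes R: "psd_mat R" and "trace (transpose T ** R ** T) = 0"
  shows "R ** T = 0"
proof -
  have "\<forall>j\<in>UNIV. column j T \<bullet> (R *v column j T) = 0"
    using assms(2) psd_matD(2)[OF R]
    by (subst sum_nonneg_eq_0_iff[symmetric]) (simp_all add: trace_congruence_eq_sum_columns)
  moreover have "column j (R ** T) = R *v column j T" for j
    by (simp add: column_def matrix_matrix_mult_def matrix_vector_mult_def vec_eq_iff)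
  ultimately have "column j (R ** T) = 0" for j
    using psd_mult_eq_0_if_quadratic_eq_0[OF R] by simp
  then show ?thesis by (simp add: vec_eq_iff column_def)
qed

lemma trace_transpose_mult_self: "trace (transpose X ** X) = (norm (X::real^'n^'m))^2"
proof -
  have "(norm X)^2 = (\<Sum>i\<in>UNIV. \<Sum>j\<in>UNIV. X $ i $ j * X $ i $ j)"
    by (simp add: power2_norm_eq_inner inner_vec_def)
  then show ?thesis
    by (simp add: trace_def matrix_matrix_mult_def transpose_def) (rule sum.swap)
qed

text \<open>For \<open>T = R - S\<close>, \<open>R T + T S = R\<^sup>2 - S\<^sup>2 = 0\<close>; multiplying by \<open>T\<close> and taking traces
  gives two nonnegative terms summing to zero, so \<open>R T = S T = 0\<close> and hence \<open>T\<^sup>T T = 0\<close>.\<close>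

lemma psd_sqrt_unique:
  fixes R S :: "real^'n^'n"
  assumes R: "psd_mat R" and S: "psd_mat S" and eq: "R ** R = S ** S"
  shows "R = S"
proof -
  define T where "T = R - S"
  have T_sym: "transpose T = T" by (simp add: T_def transpose_diff psd_matD(1)[OF R] psd_matD(1)[OF S])
  have "R ** T + T ** S = R ** R - S ** S"
    by (simp add: T_def matrix_diff_ldistrib matrix_diff_rdistrib)
  then have "T ** (R ** T + T ** S) = 0" using eq by simp
  then have "trace (T ** R ** T + T ** T ** S) = 0"
    by (simp add: matrix_add_ldistrib matrix_mul_assoc trace_def)
  then have "trace (T ** R ** T) + trace (T ** T ** S) = 0"
    by (simp add: trace_add)
  moreover have "trace (T ** T ** S) = trace (T ** S ** T)"
    by (metis matrix_mul_assoc trace_mul_sym)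
  ultimately have "trace (transpose T ** R ** T) + trace (transpose T ** S ** T) = 0"
    using T_sym by simp
  moreover have "0 \<le> trace (transpose T ** R ** T)" "0 \<le> trace (transpose T ** S ** T)"
    using R S by (simp_all add: psd_trace_congruence_nonneg)
  ultimately have "trace (transpose T ** R ** T) = 0" "trace (transpose T ** S ** T) = 0"
    by linarith+
  then have "R ** T = 0" and "S ** T = 0"
    using psd_mult_eq_0_if_trace_congruence_eq_0 R S by blast+
  then have "transpose T ** T = 0"
    using T_sym by (simp add: T_def matrix_diff_rdistrib)
  then have "norm T = 0"
    using trace_transpose_mult_self[of T] by (simp add: trace_def)
  then show ?thesis by (simp add: T_def)
qed

lemma mat_sqrt:
  assumes "psd_mat X"
  shows "psd_mat (mat_sqrt X)" and "mat_sqrt X ** mat_sqrt X = X"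
    and "transpose (mat_sqrt X) = mat_sqrt X"
proof -
  have "\<exists>!R. psd_mat R \<and> R ** R = X"
    using psd_sqrt_exists[OF assms] psd_sqrt_unique by metis
  then have "psd_mat (mat_sqrt X) \<and> mat_sqrt X ** mat_sqrt X = X"
    unfolding mat_sqrt_def by (rule theI')
  then show "psd_mat (mat_sqrt X)" "mat_sqrt X ** mat_sqrt X = X"
    and "transpose (mat_sqrt X) = mat_sqrt X"
    by (simp_all add: psd_matD(1))
qed

lemma invertible_mat_sqrt:
  assumes "pd_mat X"
  shows "invertible (mat_sqrt X)"
proof -
  have "x = 0" if "mat_sqrt X *v x = 0" for x
  proof -
    have "X *v x = 0"
      using that mat_sqrt(2)[OF psd_if_pd[OF assms]]
      by (metis matrix_vector_mul_assoc matrix_vector_mult_0_right)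
    then show ?thesis using assms by (auto simp: pd_mat_def)
  qed
  then show ?thesis
    using matrix_left_invertible_ker invertible_left_inverse by blast
qed

section \<open>Operator and Frobenius norms\<close>

lemma norm_matrix_vector_le_op_norm: "norm (X *v x) \<le> op_norm X * norm x"
  unfolding op_norm_def by (rule onorm) simp

lemma op_norm_le: "(\<And>x. norm (X *v x) \<le> c * norm x) \<Longrightarrow> op_norm X \<le> c"
  unfolding op_norm_def by (rule onorm_le)

lemma op_norm_nonneg: "0 \<le> op_norm X"
  unfolding op_norm_def by (simp add: onorm_pos_le)

lemma op_norm_mult_le: "op_norm (P ** Q) \<le> op_norm P * op_norm Q"
proof -
  have "(\<lambda>x. (P ** Q) *v x) = (\<lambda>x. P *v x) \<circ> (\<lambda>x. Q *v x)"
    by (auto simp: matrix_vector_mul_assoc)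
  then show ?thesis unfolding op_norm_def by (simp add: onorm_compose)
qed

lemma op_norm_transpose_le: "op_norm (transpose X) \<le> op_norm X"
proof (rule op_norm_le)
  fix z
  have "(norm (transpose X *v z))^2 = z \<bullet> (X *v (transpose X *v z))"
    by (simp add: power2_norm_eq_inner inner_matrix_vector_transpose[of z X])
  also have "\<dots> \<le> norm z * (op_norm X * norm (transpose X *v z))"
    by (rule order_trans[OF norm_cauchy_schwarz mult_left_mono[OF norm_matrix_vector_le_op_norm]]) simp
  finally show "norm (transpose X *v z) \<le> op_norm X * norm z"
    by (cases "transpose X *v z = 0") (simp_all add: op_norm_nonneg power2_eq_square mult_ac)
qed

lemma op_norm_transpose: "op_norm (transpose X) = op_norm X"
  by (metis antisym op_norm_transpose_le transpose_transpose)

lemma norm_isometry: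
  fixes U :: "real^'n^'m"
  assumes "transpose U ** U = mat 1"
  shows "norm (U *v x) = norm x"
proof -
  have "(U *v x) \<bullet> (U *v x) = (transpose U *v (U *v x)) \<bullet> x"
    by (rule inner_matrix_vector_transpose)
  also have "\<dots> = x \<bullet> x"
    by (simp only: matrix_vector_mul_assoc assms matrix_vector_mul_lid)
  finally have "(U *v x) \<bullet> (U *v x) = x \<bullet> x" .
  then show ?thesis by (simp add: norm_eq_sqrt_inner)
qed

lemma op_norm_isometry_le: "transpose U ** U = mat 1 \<Longrightarrow> op_norm U \<le> 1"
  by (rule op_norm_le) (simp add: norm_isometry)

lemma op_norm_isometry_mult_le:
  assumes "transpose W ** W = mat 1" and "orthogonal_matrix J"
  shows "op_norm (W ** G ** transpose J) \<le> op_norm G"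
proof -
  have "transpose (transpose J) ** transpose J = mat 1"
    using assms(2) by (simp add: orthogonal_matrix_def)
  then have J: "op_norm (transpose J) \<le> 1" by (rule op_norm_isometry_le)
  have "op_norm (W ** G ** transpose J) \<le> op_norm (W ** G) * op_norm (transpose J)"
    by (rule op_norm_mult_le)
  also have "\<dots> \<le> op_norm (W ** G)" using J by (simp add: mult_left_le op_norm_nonneg)
  also have "\<dots> \<le> op_norm W * op_norm G" by (rule op_norm_mult_le)
  also have "\<dots> \<le> op_norm G"
    using op_norm_isometry_le[OF assms(1)] by (simp add: mult_left_le_one_le op_norm_nonneg)
  finally show ?thesis .
qed

lemma op_norm_le_isometric_conj:
  assumes "transpose U ** U = mat 1" and "transpose V ** V = mat 1"
  shows "op_norm X \<le> op_norm (U ** X ** transpose V)"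
proof -
  have "transpose U ** (U ** X ** transpose V) ** V = (transpose U ** U) ** X ** (transpose V ** V)"
    by (simp only: matrix_mul_assoc)
  then have X: "X = transpose U ** (U ** X ** transpose V) ** V"
    using assms by simp
  have "op_norm X \<le> op_norm (transpose U ** (U ** X ** transpose V)) * op_norm V"
    by (subst X) (rule op_norm_mult_le)
  also have "\<dots> \<le> op_norm (transpose U ** (U ** X ** transpose V))"
    using op_norm_isometry_le[OF assms(2)] by (simp add: mult_left_le op_norm_nonneg)
  also have "\<dots> \<le> op_norm (transpose U) * op_norm (U ** X ** transpose V)"
    by (rule op_norm_mult_le)
  also have "\<dots> \<le> op_norm (U ** X ** transpose V)"
    using op_norm_isometry_le[OF assms(1)]
    by (simp add: op_norm_transpose mult_left_le_one_le op_norm_nonneg)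
  finally show ?thesis .
qed

lemma op_norm_sqrt_le:
  assumes "transpose R = R" and "R ** R = X"
  shows "op_norm R \<le> sqrt (op_norm X)"
proof (rule op_norm_le)
  fix z
  have "(norm (R *v z))^2 = (transpose R *v (R *v z)) \<bullet> z"
    by (simp add: power2_norm_eq_inner inner_matrix_vector_transpose[of "R *v z" R z])
  also have "\<dots> = z \<bullet> (X *v z)"
    by (simp only: assms matrix_vector_mul_assoc inner_commute)
  also have "\<dots> \<le> op_norm X * (norm z)^2"
    using order_trans[OF norm_cauchy_schwarz mult_left_mono[OF norm_matrix_vector_le_op_norm]]
    by (simp add: power2_eq_square mult_ac)
  finally have "sqrt ((norm (R *v z))^2) \<le> sqrt (op_norm X * (norm z)^2)"
    by (rule real_sqrt_le_mono)
  then show "norm (R *v z) \<le> sqrt (op_norm X) * norm z"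
    by (simp add: real_sqrt_mult)
qed

lemma norm_matrix_square_rows: "(norm (X::real^'n^'m))^2 = (\<Sum>i\<in>UNIV. (norm (X $ i))^2)"
  by (simp add: power2_norm_eq_inner inner_vec_def)

lemma norm_matrix_vector_le: "norm ((X::real^'n^'m) *v z) \<le> norm X * norm z"
proof -
  have "(norm (X *v z))^2 = (\<Sum>i\<in>UNIV. (X $ i \<bullet> z)^2)"
    unfolding power2_norm_eq_inner
    by (simp add: inner_vec_def matrix_vector_mul_component power2_eq_square)
  also have "\<dots> \<le> (\<Sum>i\<in>UNIV. (norm (X $ i) * norm z)^2)"
    by (intro sum_mono) (metis Cauchy_Schwarz_ineq2 abs_ge_zero power2_abs power_mono)
  also have "\<dots> = (norm X * norm z)^2"
    by (simp add: power_mult_distrib norm_matrix_square_rows sum_distrib_right)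
  finally show ?thesis by (rule power2_le_imp_le) simp
qed

lemma op_norm_le_norm: "op_norm X \<le> norm X"
  by (rule op_norm_le) (simp add: norm_matrix_vector_le)

lemma norm_transpose_matrix: "norm (transpose (X::real^'n^'m)) = norm X"
proof -
  have "(norm (transpose X))^2 = (norm X)^2"
    by (simp add: power2_norm_eq_inner inner_vec_def transpose_def) (rule sum.swap)
  then show ?thesis by (simp add: power2_eq_iff_nonneg)
qed

lemma norm_mult_transpose_le: "norm ((P::real^'n^'m) ** transpose Q) \<le> norm P * op_norm Q"
proof -
  have row: "(P ** transpose Q) $ i = Q *v (P $ i)" for i
    by (simp add: matrix_matrix_mult_def matrix_vector_mult_def transpose_def vec_eq_iff mult.commute)
  have "(norm (P ** transpose Q))^2 = (\<Sum>i\<in>UNIV. (norm (Q *v (P $ i)))^2)"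
    by (simp add: norm_matrix_square_rows row)
  also have "\<dots> \<le> (\<Sum>i\<in>UNIV. (op_norm Q * norm (P $ i))^2)"
    by (intro sum_mono power_mono norm_matrix_vector_le_op_norm) simp
  also have "\<dots> = (norm P * op_norm Q)^2"
    by (simp add: power_mult_distrib norm_matrix_square_rows sum_distrib_left mult.commute)
  finally show ?thesis by (rule power2_le_imp_le) (simp add: op_norm_nonneg)
qed

lemma norm_mult_le_op_norm: "norm ((P::real^'n^'m) ** Q) \<le> op_norm P * norm Q"
  using norm_mult_transpose_le[of "transpose Q" P]
  by (simp add: norm_transpose_matrix flip: matrix_transpose_mul) (simp add: mult.commute)

lemma norm_matrix_mult_le: "norm ((P::real^'n^'m) ** Q) \<le> norm P * norm Q"
  by (rule order_trans[OF norm_mult_le_op_norm mult_right_mono[OF op_norm_le_norm]]) simp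

lemma frob_eq_norm: "frob X = norm X"
  by (simp add: frob_def norm_eq_sqrt_inner inner_vec_def power2_eq_square)

section \<open>Residuals near a balanced factorisation\<close>

lemma norm_add3_le: "norm (x + y + z) \<le> norm x + norm y + norm (z::'a::real_normed_vector)"
  by (rule order_trans[OF norm_triangle_ineq add_right_mono[OF norm_triangle_ineq]])

lemma norm_gram_perturbation_le:
  fixes X a :: "real^'n^'m"
  shows "norm (transpose (X + a) ** (X + a) - transpose X ** X) \<le> 2 * op_norm X * norm a + (norm a)^2"
proof -
  have "transpose (X + a) ** (X + a) - transpose X ** X
      = transpose X ** a + transpose (transpose X ** a) + transpose a ** a"
    by (simp add: transpose_add matrix_add_ldistrib matrix_add_rdistrib matrix_transpose_mul algebra_simps)
  moreover have "norm (transpose X ** a) \<le> op_norm X * norm a"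
    using norm_mult_le_op_norm[of "transpose X" a] by (simp add: op_norm_transpose)
  moreover have "norm (transpose a ** a) \<le> (norm a)^2"
    using norm_matrix_mult_le[of "transpose a" a] by (simp add: norm_transpose_matrix power2_eq_square)
  ultimately show ?thesis
    using norm_add3_le[of "transpose X ** a" "transpose (transpose X ** a)" "transpose a ** a"]
    by (simp add: norm_transpose_matrix)
qed

lemma norm_product_perturbation_le:
  fixes X a :: "real^'k^'m" and Y b :: "real^'k^'n"
  shows "norm ((X + a) ** transpose (Y + b) - X ** transpose Y)
    \<le> op_norm X * norm b + op_norm Y * norm a + norm a * norm b"
proof -
  have "(X + a) ** transpose (Y + b) - X ** transpose Y
      = X ** transpose b + a ** transpose Y + a ** transpose b"
    by (simp add: transpose_add matrix_add_ldistrib matrix_add_rdistrib algebra_simps)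
  moreover have "norm (X ** transpose b) \<le> op_norm X * norm b"
    using norm_mult_le_op_norm[of X "transpose b"] by (simp add: norm_transpose_matrix)
  moreover have "norm (a ** transpose Y) \<le> op_norm Y * norm a"
    using norm_mult_transpose_le[of a Y] by (simp add: mult.commute)
  moreover have "norm (a ** transpose b) \<le> norm a * norm b"
    using norm_matrix_mult_le[of a "transpose b"] by (simp add: norm_transpose_matrix)
  ultimately show ?thesis
    using norm_add3_le[of "X ** transpose b" "a ** transpose Y" "a ** transpose b"] by simp
qed

text \<open>Both residuals are at most \<open>2 T\<close> for \<open>T = \<alpha> (la + lb) + (la\<^sup>2 + lb\<^sup>2) / 2\<close>, and
  \<open>p\<^sup>2 + q\<^sup>2 \<le> 1\<close> lets the quartic part of \<open>T\<^sup>2\<close> be absorbed into the quadratic one.\<close>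

lemma descent_scalar_bound:
  fixes \<alpha> w p q la lb nL nR \<beta> :: real
  assumes nonneg: "0 \<le> \<alpha>" "0 \<le> w" "0 \<le> la" "0 \<le> lb" "0 \<le> nL" "0 \<le> nR"
    and e: "p^2 + q^2 \<le> 1" and la: "la \<le> w * p" and lb: "lb \<le> w * q"
    and nL: "nL \<le> \<alpha> * lb + \<alpha> * la + la * lb"
    and nR: "nR \<le> 2 * \<alpha> * la + la^2 + 2 * \<alpha> * lb + lb^2"
    and \<beta>: "14 * (2 * \<alpha>^2 * w^2)^2 + 21 * (w^2)^2 * (2 * \<alpha>^2 * w^2) + 7 * (w^2)^4 \<le> \<beta>"
  shows "nL^2 / 2 + nR^2 / 8 \<le> sqrt \<beta> / 2 * (p^2 + q^2)"
proof -
  define r where "r = la^2 + lb^2"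
  define T where "T = \<alpha> * (la + lb) + r / 2"
  have "la * lb \<le> r / 2" using sum_squares_bound[of la lb] by (simp add: r_def)
  moreover have "\<alpha> * (la + lb) = \<alpha> * la + \<alpha> * lb" by (simp add: distrib_left)
  ultimately have hL: "nL \<le> T" using nL unfolding T_def by linarith
  have hR: "nR \<le> 2 * T"
  proof -
    have "2 * T = 2 * \<alpha> * la + 2 * \<alpha> * lb + r" by (simp add: T_def algebra_simps)
    then show ?thesis using nR r_def by linarith
  qed
  have "nL^2 / 2 + nR^2 / 8 \<le> T^2"
    using power_mono[OF hL nonneg(5), of 2] power_mono[OF hR nonneg(6), of 2]
    by (simp add: power_mult_distrib)
  also have "\<dots> \<le> 3 * \<alpha>^2 * r + 3/4 * r^2"
  proof -
    have sq: "(x + y / 2)^2 \<le> 3/2 * x^2 + 3/4 * y^2" for x y :: real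
    proof -
      have "0 \<le> (x - y)^2" by simp
      then show ?thesis by (simp add: power2_eq_square algebra_simps)
    qed
    have "T^2 \<le> 3/2 * \<alpha>^2 * (la + lb)^2 + 3/4 * r^2"
      using sq[of "\<alpha> * (la + lb)" r] by (simp only: T_def power_mult_distrib mult.assoc)
    moreover have "(la + lb)^2 \<le> 2 * r"
      using sum_squares_bound[of la lb] by (simp add: r_def power2_sum)
    ultimately show ?thesis
      using mult_left_mono[of "(la + lb)^2" "2 * r" "\<alpha>^2"] by simp
  qed
  also have "\<dots> \<le> (3 * \<alpha>^2 * w^2 + 3/4 * w^4) * (p^2 + q^2)"
  proof -
    have r: "r \<le> w^2 * (p^2 + q^2)"
      using power_mono[OF la nonneg(3), of 2] power_mono[OF lb nonneg(4), of 2]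
      by (simp add: r_def power_mult_distrib distrib_left)
    have "r^2 \<le> (w^2 * (p^2 + q^2))^2"
      using power_mono[OF r, of 2] by (simp add: r_def)
    also have "\<dots> = w^4 * (p^2 + q^2) * (p^2 + q^2)"
      by algebra
    also have "\<dots> \<le> w^4 * (p^2 + q^2)"
      using e by (simp add: mult_left_le)
    finally have "r^2 \<le> w^4 * (p^2 + q^2)" .
    moreover have "\<alpha>^2 * r \<le> \<alpha>^2 * (w^2 * (p^2 + q^2))"
      using r by (simp add: mult_left_mono)
    moreover have "(3 * \<alpha>^2 * w^2 + 3/4 * w^4) * (p^2 + q^2)
        = 3 * (\<alpha>^2 * (w^2 * (p^2 + q^2))) + 3/4 * (w^4 * (p^2 + q^2))"
      by (simp add: algebra_simps)
    ultimately show ?thesis by linarith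
  qed
  also have "\<dots> \<le> sqrt \<beta> / 2 * (p^2 + q^2)"
  proof (rule mult_right_mono)
    have "(6 * \<alpha>^2 * w^2 + 3/2 * w^4)^2 = 36 * \<alpha>^4 * w^4 + 18 * \<alpha>^2 * w^6 + 9/4 * w^8"
      by algebra
    also have "\<dots> \<le> 14 * (2 * \<alpha>^2 * w^2)^2 + 21 * (w^2)^2 * (2 * \<alpha>^2 * w^2) + 7 * (w^2)^4"
      by (simp add: power_mult_distrib algebra_simps)
    finally have "6 * \<alpha>^2 * w^2 + 3/2 * w^4 \<le> sqrt \<beta>"
      using \<beta> by (simp add: real_le_rsqrt)
    then show "3 * \<alpha>^2 * w^2 + 3/4 * w^4 \<le> sqrt \<beta> / 2" by simp
  qed simp
  finally show ?thesis .
qed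
definition balanced_factorization :: "real^'n^'m \<Rightarrow> real \<Rightarrow> real^'k^'m \<Rightarrow> real^'k^'n \<Rightarrow> bool" where
  "balanced_factorization N \<alpha> X Y \<longleftrightarrow>
     X ** transpose Y = N \<and> transpose X ** X = transpose Y ** Y \<and> op_norm X \<le> \<alpha> \<and> op_norm Y \<le> \<alpha>"

lemma balanced_residuals_le:
  assumes bal: "balanced_factorization N \<alpha> X0 Y0"
    and X: "norm (X - X0) \<le> w * p" and Y: "norm (Y - Y0) \<le> w * q"
    and "0 \<le> w" and "p^2 + q^2 \<le> 1"
    and "14 * (2 * \<alpha>^2 * w^2)^2 + 21 * (w^2)^2 * (2 * \<alpha>^2 * w^2) + 7 * (w^2)^4 \<le> \<beta>"
  shows "(norm (X ** transpose Y - N))^2 / 2 + (norm (transpose X ** X - transpose Y ** Y))^2 / 8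
    \<le> sqrt \<beta> / 2 * (p^2 + q^2)"
proof -
  define a b where "a = X - X0" and "b = Y - Y0"
  have XY: "X = X0 + a" "Y = Y0 + b" by (simp_all add: a_def b_def)
  have opX: "op_norm X0 \<le> \<alpha>" and opY: "op_norm Y0 \<le> \<alpha>" and "0 \<le> \<alpha>"
    using bal op_norm_nonneg[of X0] by (auto simp: balanced_factorization_def)
  have "norm (X ** transpose Y - N) \<le> op_norm X0 * norm b + op_norm Y0 * norm a + norm a * norm b"
    using bal norm_product_perturbation_le[of X0 a Y0 b] by (simp add: XY balanced_factorization_def)
  also have "\<dots> \<le> \<alpha> * norm b + \<alpha> * norm a + norm a * norm b"
    using opX opY by (intro add_mono mult_right_mono) simp_all
  finally have L: "norm (X ** transpose Y - N) \<le> \<alpha> * norm b + \<alpha> * norm a + norm a * norm b" .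
  have "transpose X ** X - transpose Y ** Y
      = (transpose (X0 + a) ** (X0 + a) - transpose X0 ** X0) - (transpose (Y0 + b) ** (Y0 + b) - transpose Y0 ** Y0)"
    using bal by (simp add: XY balanced_factorization_def)
  then have "norm (transpose X ** X - transpose Y ** Y)
      \<le> norm (transpose (X0 + a) ** (X0 + a) - transpose X0 ** X0)
        + norm (transpose (Y0 + b) ** (Y0 + b) - transpose Y0 ** Y0)"
    by (simp only: norm_triangle_ineq4)
  also have "\<dots> \<le> (2 * op_norm X0 * norm a + (norm a)^2) + (2 * op_norm Y0 * norm b + (norm b)^2)"
    by (rule add_mono[OF norm_gram_perturbation_le norm_gram_perturbation_le])
  also have "\<dots> \<le> (2 * \<alpha> * norm a + (norm a)^2) + (2 * \<alpha> * norm b + (norm b)^2)"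
    using opX opY by (intro add_mono mult_right_mono) simp_all
  finally have R: "norm (transpose X ** X - transpose Y ** Y) \<le> 2 * \<alpha> * norm a + (norm a)^2 + 2 * \<alpha> * norm b + (norm b)^2"
    by simp
  show ?thesis
    using descent_scalar_bound[OF \<open>0 \<le> \<alpha>\<close> \<open>0 \<le> w\<close> norm_ge_zero norm_ge_zero norm_ge_zero norm_ge_zero
        \<open>p^2 + q^2 \<le> 1\<close> _ _ L R] assms(1-3,6)
    by (simp add: a_def b_def)
qed

section \<open>Whitened coordinates\<close>

lemma norm_mult_mat_sqrt_le:
  assumes "psd_mat \<Sigma>"
  shows "norm (X ** mat_sqrt \<Sigma>) \<le> sqrt (op_norm \<Sigma>) * norm X"
proof -
  have "norm (X ** mat_sqrt \<Sigma>) \<le> norm X * op_norm (mat_sqrt \<Sigma>)"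
    using norm_mult_transpose_le[of X "mat_sqrt \<Sigma>"] mat_sqrt(3)[OF assms] by simp
  also have "\<dots> \<le> norm X * sqrt (op_norm \<Sigma>)"
    using op_norm_sqrt_le[OF mat_sqrt(3,2)[OF assms]] by (simp add: mult_left_mono)
  finally show ?thesis by (simp add: mult.commute)
qed

lemma Qloss_whitened:
  fixes \<Sigma> B :: "real^'d^'d" and A :: "real^'d^'p"
  defines "S \<equiv> mat_sqrt \<Sigma>"
  assumes "psd_mat \<Sigma>"
  shows "Qloss \<Sigma> M \<Omega> (A, B) = trace \<Omega> / 2
    + (norm ((A ** S) ** transpose (S ** B ** S) - M ** S))^2 / 2
    + (norm (transpose (A ** S) ** (A ** S) - transpose (S ** B ** S) ** (S ** B ** S)))^2 / 8"
proof -
  have S: "transpose S = S" "S ** S = \<Sigma>"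
    using mat_sqrt[OF assms(2)] by (simp_all add: S_def)
  have "A ** \<Sigma> ** transpose B ** S = (A ** S) ** transpose (S ** B ** S)"
    by (simp add: S(2)[symmetric] matrix_transpose_mul S(1) matrix_mul_assoc)
  moreover have "S ** (transpose A ** A - transpose B ** \<Sigma> ** B) ** S
      = transpose (A ** S) ** (A ** S) - transpose (S ** B ** S) ** (S ** B ** S)"
    by (simp add: S(2)[symmetric] matrix_transpose_mul S(1) matrix_mul_assoc matrix_diff_ldistrib
        matrix_diff_rdistrib)
  ultimately show ?thesis
    by (simp add: Qloss_def Lloss_def Rreg_def frob_eq_norm flip: S_def)
qed

lemma Inf_Qloss_ge_half_trace:
  fixes \<Sigma> :: "real^'d^'d" and M :: "real^'d^'p" and \<Omega> :: "real^'p^'p"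
  shows "trace \<Omega> / 2 \<le> (INF \<eta>. Qloss \<Sigma> M \<Omega> \<eta>)"
proof (rule cINF_greatest)
  fix \<eta> :: "(real^'d^'p) \<times> (real^'d^'d)"
  show "trace \<Omega> / 2 \<le> Qloss \<Sigma> M \<Omega> \<eta>"
    by (cases \<eta>) (simp add: Qloss_def Lloss_def Rreg_def)
qed simp

lemma Pnorm_whitened:
  fixes \<Sigma> dB :: "real^'d^'d" and dA :: "real^'d^'p"
  defines "S \<equiv> mat_sqrt \<Sigma>"
  assumes "psd_mat \<Sigma>"
  shows "Pnorm \<Sigma> (dA, dB) = sqrt ((norm dA)^2 + (norm (S ** dB))^2)"
proof -
  have S: "transpose S = S" "S ** S = \<Sigma>"
    using mat_sqrt[OF assms(2)] by (simp_all add: S_def)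
  have "transpose dB ** \<Sigma> ** dB = transpose (S ** dB) ** (S ** dB)"
    by (simp add: S(2)[symmetric] matrix_transpose_mul S(1) matrix_mul_assoc)
  then show ?thesis by (simp add: Pnorm_def trace_transpose_mult_self)
qed

lemma Sset_whitened:
  fixes \<Sigma> :: "real^'d^'d"
  defines "S \<equiv> mat_sqrt \<Sigma>"
  assumes "invertible S" and "(As, Bs) \<in> Sset \<Sigma> U \<Gamma> V"
  obtains J where "orthogonal_matrix J"
    and "As ** S = U ** mat_sqrt \<Gamma> ** transpose J"
    and "S ** Bs ** S = V ** mat_sqrt \<Gamma> ** transpose J"
proof -
  let ?Si = "matrix_inv S" and ?G = "mat_sqrt \<Gamma>"
  obtain J where J: "orthogonal_matrix J"
    and As: "As = U ** ?G ** transpose J ** ?Si"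
    and Bs: "Bs = ?Si ** V ** ?G ** transpose J ** ?Si"
    using assms(3) by (auto simp: Sset_def S_def)
  have "As ** S = U ** ?G ** transpose J ** (?Si ** S)"
    by (simp add: As matrix_mul_assoc)
  moreover have "S ** Bs ** S = (S ** ?Si) ** V ** ?G ** transpose J ** (?Si ** S)"
    by (simp add: Bs matrix_mul_assoc)
  ultimately show ?thesis
    using that J matrix_inv_mult[OF assms(2)] by simp
qed

lemma svd_balanced_factorization:
  fixes U :: "real^'d^'p" and V J G :: "real^'d^'d"
  assumes U: "transpose U ** U = mat 1" and V: "orthogonal_matrix V" and J: "orthogonal_matrix J"
    and G: "transpose G = G" "G ** G = \<Gamma>"
  shows "balanced_factorization (U ** \<Gamma> ** transpose V) (sqrt (op_norm (U ** \<Gamma> ** transpose V)))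
           (U ** G ** transpose J) (V ** G ** transpose J)"
proof -
  have VV: "transpose V ** V = mat 1" and JJ: "transpose J ** J = mat 1"
    using V J by (simp_all add: orthogonal_matrix_def)
  have cancel: "transpose U ** (U ** X) = X" "transpose V ** (V ** X) = X"
      "transpose J ** (J ** X) = X" "G ** (G ** X) = \<Gamma> ** X" for X
    using U VV JJ G(2) by (simp_all add: matrix_mul_assoc)
  have "(U ** G ** transpose J) ** transpose (V ** G ** transpose J) = U ** \<Gamma> ** transpose V"
    and "transpose (U ** G ** transpose J) ** (U ** G ** transpose J)
      = transpose (V ** G ** transpose J) ** (V ** G ** transpose J)"
    by (simp_all add: matrix_transpose_mul G(1) matrix_mul_assoc[symmetric] cancel)
  moreover have "op_norm G \<le> sqrt (op_norm (U ** \<Gamma> ** transpose V))"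
    using op_norm_sqrt_le[OF G] op_norm_le_isometric_conj[OF U VV, of \<Gamma>] by (meson order_trans real_sqrt_le_mono)
  then have "op_norm (U ** G ** transpose J) \<le> sqrt (op_norm (U ** \<Gamma> ** transpose V))"
    and "op_norm (V ** G ** transpose J) \<le> sqrt (op_norm (U ** \<Gamma> ** transpose V))"
    using op_norm_isometry_mult_le[OF U J] op_norm_isometry_mult_le[OF VV J] by (meson order_trans)+
  ultimately show ?thesis by (simp add: balanced_factorization_def)
qed

lemma Sset_whitened_balanced:
  fixes \<Sigma> :: "real^'d^'d" and U :: "real^'d^'p"
  defines "S \<equiv> mat_sqrt \<Sigma>"
  assumes "pd_mat \<Sigma>" and "transpose U ** U = mat 1" and "orthogonal_matrix V" and "psd_mat \<Gamma>"
    and "M ** S = U ** \<Gamma> ** transpose V" and "(As, Bs) \<in> Sset \<Sigma> U \<Gamma> V"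
  shows "balanced_factorization (M ** S) (sqrt (sigma_max (M ** S))) (As ** S) (S ** Bs ** S)"
proof -
  obtain J where "orthogonal_matrix J" "As ** S = U ** mat_sqrt \<Gamma> ** transpose J"
    "S ** Bs ** S = V ** mat_sqrt \<Gamma> ** transpose J"
    using Sset_whitened invertible_mat_sqrt[OF assms(2)] assms(7) unfolding S_def by blast
  moreover have "transpose (mat_sqrt \<Gamma>) = mat_sqrt \<Gamma>" "mat_sqrt \<Gamma> ** mat_sqrt \<Gamma> = \<Gamma>"
    using mat_sqrt[OF assms(5)] by simp_all
  ultimately show ?thesis
    using svd_balanced_factorization[OF assms(3,4)] assms(6)
    by (simp add: sigma_max_def op_norm_def)
qed

lemma beta_lower_bound:
  fixes \<Sigma> :: "real^'d^'d" and M :: "real^'d^'p"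
  defines "\<alpha> \<equiv> sqrt (sigma_max (M ** mat_sqrt \<Sigma>))" and "w \<equiv> sqrt (op_norm \<Sigma>)"
  shows "14 * (2 * \<alpha>^2 * w^2)^2 + 21 * (w^2)^2 * (2 * \<alpha>^2 * w^2) + 7 * (w^2)^4 \<le> beta \<Sigma> M"
proof -
  have "\<alpha>^2 = sigma_max (M ** mat_sqrt \<Sigma>)" and "w^2 = op_norm \<Sigma>"
    using op_norm_nonneg by (simp_all add: \<alpha>_def w_def sigma_max_def op_norm_def)
  then have "K1 \<Sigma> M = 2 * \<alpha>^2 * w^2" and "op_norm \<Sigma> = w^2"
    by (simp_all add: K1_def sigma_max_def op_norm_def)
  moreover have "beta \<Sigma> M = 14 * (K1 \<Sigma> M)^2 + 21 * (op_norm \<Sigma>)^2 * K1 \<Sigma> M + 7 * (op_norm \<Sigma>)^4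
      + 7 * (cond_num \<Sigma>)^2 * (K1 \<Sigma> M)^2"
    by (simp add: beta_def algebra_simps)
  ultimately show ?thesis by simp
qed

theorem lemma2:
  fixes \<Sigma> :: "real^'d^'d" and M :: "real^'d^'p" and \<Omega> :: "real^'p^'p"
    and U :: "real^'d^'p" and \<Gamma> :: "real^'d^'d" and V :: "real^'d^'d"
    and \<theta> \<theta>s :: "(real^'d^'p) \<times> (real^'d^'d)"
  assumes pd: "CARD('d) \<le> CARD('p)"
    and Sigma_pd: "pd_mat \<Sigma>"
    and Omega_psd: "psd_mat \<Omega>"
    and full_rank: "rank (M ** mat_sqrt \<Sigma>) = CARD('d)"
    and svd_U: "transpose U ** U = mat 1"
    and svd_V: "orthogonal_matrix V"
    and svd_Gamma: "diag_mat \<Gamma>" "\<forall>i. 0 \<le> \<Gamma> $ i $ i"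
    and svd: "M ** mat_sqrt \<Sigma> = U ** \<Gamma> ** transpose V"
    and close: "\<exists>\<theta>'\<in>Sset \<Sigma> U \<Gamma> V. Pnorm \<Sigma> (\<theta> - \<theta>') \<le> eps0 \<Sigma> M"
    and proj_mem: "\<theta>s \<in> Sset \<Sigma> U \<Gamma> V"
    and proj_min: "\<forall>\<theta>'\<in>Sset \<Sigma> U \<Gamma> V. Pnorm \<Sigma> (\<theta> - \<theta>s) \<le> Pnorm \<Sigma> (\<theta> - \<theta>')"
  shows "Qloss \<Sigma> M \<Omega> \<theta> - (INF \<eta>. Qloss \<Sigma> M \<Omega> \<eta>)
           \<le> sqrt (beta \<Sigma> M) / 2 * (Pnorm \<Sigma> (\<theta> - \<theta>s))^2"
proof -
  obtain A B As Bs where \<theta>: "\<theta> = (A, B)" and \<theta>s: "\<theta>s = (As, Bs)" by fastforce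
  define S where "S = mat_sqrt \<Sigma>"
  define w where "w = sqrt (op_norm \<Sigma>)"
  have \<Sigma>: "psd_mat \<Sigma>" using Sigma_pd by (rule psd_if_pd)
  have dA: "norm (A ** S - As ** S) \<le> w * norm (A - As)"
    using norm_mult_mat_sqrt_le[OF \<Sigma>, of "A - As"] by (simp add: S_def w_def matrix_diff_rdistrib)
  have dB: "norm (S ** B ** S - S ** Bs ** S) \<le> w * norm (S ** (B - Bs))"
    using norm_mult_mat_sqrt_le[OF \<Sigma>, of "S ** (B - Bs)"]
    by (simp add: S_def w_def matrix_diff_ldistrib matrix_diff_rdistrib matrix_mul_assoc)
  have P: "Pnorm \<Sigma> (\<theta> - \<theta>s) = sqrt ((norm (A - As))^2 + (norm (S ** (B - Bs)))^2)"
    using Pnorm_whitened[OF \<Sigma>] by (simp add: \<theta> \<theta>s S_def)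
  have "eps0 \<Sigma> M \<le> 1" by (simp add: eps0_def)
  then have "Pnorm \<Sigma> (\<theta> - \<theta>s) \<le> 1"
    using close proj_min by (meson order_trans)
  then have e: "(norm (A - As))^2 + (norm (S ** (B - Bs)))^2 \<le> 1" by (simp add: P)
  have bal: "balanced_factorization (M ** S) (sqrt (sigma_max (M ** S))) (As ** S) (S ** Bs ** S)"
    using Sset_whitened_balanced[OF Sigma_pd svd_U svd_V psd_if_diag_nonneg[OF svd_Gamma] svd]
      proj_mem by (simp add: \<theta>s S_def)
  have "Qloss \<Sigma> M \<Omega> \<theta> - trace \<Omega> / 2
      \<le> sqrt (beta \<Sigma> M) / 2 * ((norm (A - As))^2 + (norm (S ** (B - Bs)))^2)"
    using balanced_residuals_le[OF bal dA dB _ e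
        beta_lower_bound[where \<Sigma> = \<Sigma> and M = M, folded S_def w_def]]
    by (simp add: \<theta> S_def w_def op_norm_nonneg Qloss_whitened[OF \<Sigma>])
  then show ?thesis using Inf_Qloss_ge_half_trace[of \<Omega> \<Sigma> M] by (simp add: P)
qed

end
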